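(* Let $m$ and $n$ be positive integers and let $\alpha\in[0,1]$ be rational such that $\alpha nm$ is an integer. Let $E=(C,V)$ be an approval election with $m$ candidates, $n$ voters and $\mathrm{satr}(E)=\alpha$. If for each two candidates $c_j,c_k\in C$ we have $\big||A(c_j)|-|A(c_k)|\big|\le 1$, then $\mathrm{ehd}(E)$ is largest among all elections with $m$ candidates, $n$ voters and saturation $\alpha$.
   Context: An (approval) election is $E=(C,V)$ with $C=\{c_1,\dots,c_m\}$ and voters $V=(v_1,\dots,v_n)$, each vote a binary vector in $\{0,1\}^m$; $A(c)$ is the set of voters approving candidate $c$ and $A(v)$ the set of candidates approved by vote $v$. $\mathrm{satr}(E)=\frac{1}{nm}\sum_{v\in V}|A(v)|$. $\mathrm{ham}(u,v)=\sum_j|u[j]-v[j]|$, and $\mathrm{ehd}(E)=\sum_{u\in V}\sum_{v\in V}\mathrm{ham}(u,v)$ (over all ordered pairs of voters). *)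

theory Defs
  imports Complex_Main
begin

text \<open>An approval election with m candidates (indices 0..m-1) and n voters
(indices 0..n-1) is represented by V :: nat => nat => bool, where V i j means
voter i approves candidate j. Only values with i < n and j < m matter.\<close>

definition voter_approvals :: "nat \<Rightarrow> (nat \<Rightarrow> bool) \<Rightarrow> nat" where
  "voter_approvals m v = card {j. j < m \<and> v j}"

definition cand_approvals :: "nat \<Rightarrow> (nat \<Rightarrow> nat \<Rightarrow> bool) \<Rightarrow> nat \<Rightarrow> nat" where
  "cand_approvals n V j = card {i. i < n \<and> V i j}"

definition satr :: "nat \<Rightarrow> nat \<Rightarrow> (nat \<Rightarrow> nat \<Rightarrow> bool) \<Rightarrow> real" where
  "satr m n V = (\<Sum>i<n. real (voter_approvals m (V i))) / (real n * real m)"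

definition ham :: "nat \<Rightarrow> (nat \<Rightarrow> bool) \<Rightarrow> (nat \<Rightarrow> bool) \<Rightarrow> nat" where
  "ham m u v = card {j. j < m \<and> u j \<noteq> v j}"

definition ehd :: "nat \<Rightarrow> nat \<Rightarrow> (nat \<Rightarrow> nat \<Rightarrow> bool) \<Rightarrow> nat" where
  "ehd m n V = (\<Sum>i<n. \<Sum>k<n. ham m (V i) (V k))"

end

theory Submission
  imports Defs
begin

text \<open>Summing the Hamming distances candidate by candidate, a candidate approved by \<open>a\<close> of
the \<open>n\<close> voters contributes \<open>2 a (n - a)\<close> ordered disagreeing pairs. Hence
\<open>ehd = 2 n T - 2 \<Sum>\<^sub>j a\<^sub>j\<^sup>2\<close>, where the total number \<open>T\<close> of approvals is fixed
by the saturation. Maximising \<open>ehd\<close> means minimising the sum of squares of integers with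
fixed sum, and a vector whose entries differ by at most one is such a minimiser.\<close>

lemma card_less_eq_sum_of_bool:
  fixes m :: nat
  shows "int (card {j. j < m \<and> P j}) = (\<Sum>j<m. of_bool (P j))"
proof -
  have "{j. j < m \<and> P j} = {..<m} \<inter> {j. P j}" by auto
  then show ?thesis by simp
qed

lemma disagreeing_pairs_count:
  fixes c :: "nat \<Rightarrow> bool" and n :: nat
  defines "a \<equiv> int (card {i. i < n \<and> c i})"
  shows "(\<Sum>i<n. \<Sum>k<n. of_bool (c i \<noteq> c k)) = 2 * a * (int n - a)"
proof -
  have complement: "int (card {i. i < n \<and> \<not> c i}) = int n - a"
  proof -
    have "{i. i < n \<and> \<not> c i} = {..<n} - {i. i < n \<and> c i}" by auto
    moreover have "card {i. i < n \<and> c i} \<le> card {..<n}" by (rule card_mono) auto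
    ultimately show ?thesis
      unfolding a_def by (simp add: card_Diff_subset of_nat_diff subset_eq)
  qed
  have "(\<Sum>i<n. \<Sum>k<n. of_bool (c i \<noteq> c k))
      = (\<Sum>i<n. \<Sum>k<n. of_bool (c i) * of_bool (\<not> c k) + of_bool (\<not> c i) * of_bool (c k) :: int)"
    by (intro sum.cong) auto
  also have "\<dots> = (\<Sum>i<n. of_bool (c i)) * (\<Sum>k<n. of_bool (\<not> c k))
      + (\<Sum>i<n. of_bool (\<not> c i)) * (\<Sum>k<n. of_bool (c k))"
    by (simp only: sum.distrib sum_product)
  also have "\<dots> = 2 * a * (int n - a)"
    unfolding card_less_eq_sum_of_bool[symmetric] complement a_def by simp
  finally show ?thesis .
qed

lemma ehd_eq_total_approvals_minus_squares:
  "int (ehd m n W) = 2 * int n * (\<Sum>j<m. int (cand_approvals n W j))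
     - 2 * (\<Sum>j<m. int (cand_approvals n W j)^2)"
proof -
  have "int (ehd m n W) = (\<Sum>i<n. \<Sum>k<n. \<Sum>j<m. of_bool (W i j \<noteq> W k j))"
    by (simp add: ehd_def ham_def card_less_eq_sum_of_bool)
  also have "\<dots> = (\<Sum>j<m. \<Sum>i<n. \<Sum>k<n. of_bool (W i j \<noteq> W k j))"
    by (simp only: sum.swap[where A = "{..<n}" and B = "{..<m}"])
  also have "\<dots> = (\<Sum>j<m. 2 * int (cand_approvals n W j) * (int n - int (cand_approvals n W j)))"
    unfolding cand_approvals_def by (simp only: disagreeing_pairs_count)
  also have "\<dots> = 2 * int n * (\<Sum>j<m. int (cand_approvals n W j))
     - 2 * (\<Sum>j<m. int (cand_approvals n W j)^2)"
    by (simp add: sum_subtractf sum_distrib_left algebra_simps power2_eq_square)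
  finally show ?thesis .
qed

lemma sum_voter_approvals_eq_sum_cand_approvals:
  "(\<Sum>i<n. voter_approvals m (W i)) = (\<Sum>j<m. cand_approvals n W j)"
proof -
  have "int (\<Sum>i<n. voter_approvals m (W i)) = (\<Sum>i<n. \<Sum>j<m. of_bool (W i j))"
    by (simp only: of_nat_sum voter_approvals_def card_less_eq_sum_of_bool)
  also have "\<dots> = (\<Sum>j<m. \<Sum>i<n. of_bool (W i j))"
    by (rule sum.swap)
  also have "\<dots> = int (\<Sum>j<m. cand_approvals n W j)"
    by (simp only: of_nat_sum cand_approvals_def card_less_eq_sum_of_bool)
  finally show ?thesis by (simp only: of_nat_eq_iff)
qed

lemma satr_eq_total_approvals:
  "satr m n W = real (\<Sum>j<m. cand_approvals n W j) / (real n * real m)"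
  unfolding satr_def sum_voter_approvals_eq_sum_cand_approvals[symmetric] by simp

lemma square_ge_secant:
  fixes x q :: int
  shows "(2 * q + 1) * x - q * (q + 1) \<le> x^2"
proof -
  have "0 \<le> (x - q) * (x - q - 1)"
    by (cases "x \<le> q") (auto intro: mult_nonpos_nonpos mult_nonneg_nonneg)
  then show ?thesis by (simp add: power2_eq_square algebra_simps)
qed

lemma sum_squares_balanced_le:
  fixes a b :: "nat \<Rightarrow> int"
  assumes "m > 0"
    and balanced: "\<forall>j<m. \<forall>k<m. \<bar>b j - b k\<bar> \<le> 1"
    and same_sum: "(\<Sum>j<m. a j) = (\<Sum>j<m. b j)"
  shows "(\<Sum>j<m. (b j)^2) \<le> (\<Sum>j<m. (a j)^2)"
proof -
  define q where "q = Min (b ` {..<m})"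
  have "q \<in> b ` {..<m}"
    unfolding q_def using \<open>m > 0\<close> by (intro Min_in) auto
  then obtain j0 where "j0 < m" "b j0 = q" by auto
  have b_on_secant: "(b j)^2 = (2 * q + 1) * b j - q * (q + 1)" if "j < m" for j
  proof -
    have "q \<le> b j" unfolding q_def using that by simp
    moreover have "b j \<le> q + 1" using balanced that \<open>j0 < m\<close> \<open>b j0 = q\<close> by fastforce
    ultimately have "b j = q \<or> b j = q + 1" by linarith
    then show ?thesis by (auto simp: power2_eq_square algebra_simps)
  qed
  have "(\<Sum>j<m. (b j)^2) = (\<Sum>j<m. (2 * q + 1) * b j - q * (q + 1))"
    using b_on_secant by (intro sum.cong) auto
  also have "\<dots> = (\<Sum>j<m. (2 * q + 1) * a j - q * (q + 1))"
    using same_sum by (simp add: sum_subtractf sum_distrib_left[symmetric])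
  also have "\<dots> \<le> (\<Sum>j<m. (a j)^2)"
    by (intro sum_mono square_ge_secant)
  finally show ?thesis .
qed

theorem lemma3:
  fixes m n :: nat and \<alpha> :: real and V :: "nat \<Rightarrow> nat \<Rightarrow> bool"
  assumes "m > 0" and "n > 0"
    and "\<alpha> \<in> \<rat>" and "0 \<le> \<alpha>" and "\<alpha> \<le> 1"
    and "\<alpha> * real n * real m \<in> \<int>"
    and "satr m n V = \<alpha>"
    and "\<forall>j<m. \<forall>k<m. \<bar>int (cand_approvals n V j) - int (cand_approvals n V k)\<bar> \<le> 1"
  shows "\<forall>W :: nat \<Rightarrow> nat \<Rightarrow> bool. satr m n W = \<alpha> \<longrightarrow> ehd m n W \<le> ehd m n V"
proof (intro allI impI)
  \<comment> \<open>The rationality and integrality hypotheses on \<open>\<alpha>\<close> only make saturation \<open>\<alpha>\<close>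
    attainable; the inequality does not need them.\<close>
  fix W :: "nat \<Rightarrow> nat \<Rightarrow> bool"
  assume "satr m n W = \<alpha>"
  with assms(7) have "real (\<Sum>j<m. cand_approvals n W j) / (real n * real m)
      = real (\<Sum>j<m. cand_approvals n V j) / (real n * real m)"
    by (simp only: satr_eq_total_approvals)
  with assms(1,2) have "(\<Sum>j<m. cand_approvals n W j) = (\<Sum>j<m. cand_approvals n V j)"
    by (simp del: of_nat_sum)
  then have same_total: "(\<Sum>j<m. int (cand_approvals n W j)) = (\<Sum>j<m. int (cand_approvals n V j))"
    by (simp flip: of_nat_sum)
  have "(\<Sum>j<m. int (cand_approvals n V j)^2) \<le> (\<Sum>j<m. int (cand_approvals n W j)^2)"
    using sum_squares_balanced_le[OF assms(1) assms(8) same_total] .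
  then have "int (ehd m n W) \<le> int (ehd m n V)"
    unfolding ehd_eq_total_approvals_minus_squares same_total by simp
  then show "ehd m n W \<le> ehd m n V" by simp
qed

end
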